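(* Let $K$ be an integral domain (not necessarily Noetherian) and $X$ a set. No proper non-zero ideal $I$ of the free $K$-algebra $K\langle X\rangle$ is free as a $K$-algebra, i.e. there is no set $Y$ with $I\cong K\langle Y\rangle$ as $K$-algebras.
   Context: The free $K$-algebra $K\langle X\rangle$ is the semigroup ring over $K$ of the free semigroup $X^+$ (polynomials in non-commuting variables without constant term; no identity). Integral domains are commutative with $1$. *)

theory Defs
  imports Main
begin

text \<open>The free (non-unital) K-algebra K<X> on a set X: finitely supported
  K-valued functions on the free semigroup X^+ (non-empty words over X),
  represented as functions on lists vanishing outside non-empty words over X.\<close>

definition free_alg :: "'x set \<Rightarrow> ('x list \<Rightarrow> 'k::idom) set" where
  "free_alg X = {f. finite {w. f w \<noteq> 0} \<and> (\<forall>w. f w \<noteq> 0 \<longrightarrow> w \<noteq> [] \<and> set w \<subseteq> X)}"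

definition fa_add :: "('x list \<Rightarrow> 'k::idom) \<Rightarrow> ('x list \<Rightarrow> 'k) \<Rightarrow> ('x list \<Rightarrow> 'k)" where
  "fa_add f g = (\<lambda>w. f w + g w)"

definition fa_smult :: "'k::idom \<Rightarrow> ('x list \<Rightarrow> 'k) \<Rightarrow> ('x list \<Rightarrow> 'k)" where
  "fa_smult c f = (\<lambda>w. c * f w)"

definition fa_mult :: "('x list \<Rightarrow> 'k::idom) \<Rightarrow> ('x list \<Rightarrow> 'k) \<Rightarrow> ('x list \<Rightarrow> 'k)" where
  "fa_mult f g = (\<lambda>w. \<Sum>p\<in>{(u, v). u @ v = w}. f (fst p) * g (snd p))"

definition fa_ideal :: "'x set \<Rightarrow> ('x list \<Rightarrow> 'k::idom) set \<Rightarrow> bool" where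
  "fa_ideal X I \<longleftrightarrow> I \<subseteq> free_alg X \<and> (\<lambda>w. 0) \<in> I
     \<and> (\<forall>f\<in>I. \<forall>g\<in>I. fa_add f g \<in> I)
     \<and> (\<forall>c. \<forall>f\<in>I. fa_smult c f \<in> I)
     \<and> (\<forall>f\<in>I. \<forall>g\<in>free_alg X. fa_mult f g \<in> I \<and> fa_mult g f \<in> I)"

definition fa_alg_iso ::
  "(('x list \<Rightarrow> 'k::idom) \<Rightarrow> ('y list \<Rightarrow> 'k)) \<Rightarrow> ('x list \<Rightarrow> 'k) set \<Rightarrow> ('y list \<Rightarrow> 'k) set \<Rightarrow> bool" where
  "fa_alg_iso \<phi> A B \<longleftrightarrow> bij_betw \<phi> A B
     \<and> (\<forall>f\<in>A. \<forall>g\<in>A. \<phi> (fa_add f g) = fa_add (\<phi> f) (\<phi> g))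
     \<and> (\<forall>c. \<forall>f\<in>A. \<phi> (fa_smult c f) = fa_smult c (\<phi> f))
     \<and> (\<forall>f\<in>A. \<forall>g\<in>A. \<phi> (fa_mult f g) = fa_mult (\<phi> f) (\<phi> g))"

end

theory Submission
  imports Defs
begin

text \<open>Suppose \<phi> : I \<cong> K<Y>. Pick a letter y of Y and g \<in> I with \<phi> g = y. For a letter x
  of X the elements x g and g x of I satisfy g (x g) = (g x) g, so the image A of x g
  satisfies y A = B y in K<Y>. Comparing words, every word of A ends in y, hence
  A = c y + Z y with Z \<in> K<Y>. Pulling Z back to t \<in> I gives x g = c g + t g, and as the
  semigroup ring of the free monoid over a domain has no zero divisors, x = c + t; since
  x and t have no constant term, x = t \<in> I. An ideal containing every letter is all of K<X>.\<close>

definition fa_monom :: "'a list \<Rightarrow> 'a list \<Rightarrow> 'k::idom" where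
  "fa_monom w = (\<lambda>v. if v = w then 1 else 0)"

lemma splits_eq_take_drop: "{(u, v). u @ v = w} = (\<lambda>i. (take i w, drop i w)) ` {..length w}"
proof (rule set_eqI, rule iffI)
  fix p assume "p \<in> {(u, v). u @ v = w}"
  then obtain u v where "p = (u, v)" "u @ v = w" by auto
  then show "p \<in> (\<lambda>i. (take i w, drop i w)) ` {..length w}"
    by (auto simp: image_iff intro!: bexI[of _ "length u"])
qed auto

lemma finite_splits: "finite {(u, v). u @ v = w}"
  by (simp add: splits_eq_take_drop)

lemma sum_eq_single_term:
  assumes "finite S" "a \<in> S" "\<And>p. p \<in> S \<Longrightarrow> p \<noteq> a \<Longrightarrow> F p = 0"
  shows "sum F S = F a"
proof -
  have "sum F S = F a + sum F (S - {a})" using assms(1,2) by (rule sum.remove)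
  also have "sum F (S - {a}) = 0" using assms(3) by (intro sum.neutral) auto
  finally show ?thesis by simp
qed

lemma fa_mult_assoc:
  fixes f g h :: "'a list \<Rightarrow> 'k::idom"
  shows "fa_mult f (fa_mult g h) = fa_mult (fa_mult f g) h"
proof
  fix w :: "'a list"
  let ?T = "{(a, b, c). a @ b @ c = w}"
  let ?F = "\<lambda>t. f (fst t) * g (fst (snd t)) * h (snd (snd t))"
  have "fa_mult f (fa_mult g h) w
      = (\<Sum>(p, q)\<in>Sigma {(u, v). u @ v = w} (\<lambda>p. {(a, b). a @ b = snd p}). f (fst p) * (g (fst q) * h (snd q)))"
    unfolding fa_mult_def sum_distrib_left by (rule sum.Sigma) (auto simp: finite_splits)
  also have "\<dots> = sum ?F ?T"
    by (rule sum.reindex_bij_witness[where i = "\<lambda>(a, b, c). ((a, b @ c), (b, c))"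
          and j = "\<lambda>(p, q). (fst p, fst q, snd q)"]) (auto simp: mult.assoc)
  also have "\<dots> = (\<Sum>(p, q)\<in>Sigma {(u, v). u @ v = w} (\<lambda>p. {(a, b). a @ b = fst p}). f (fst q) * g (snd q) * h (snd p))"
    by (rule sum.reindex_bij_witness[where i = "\<lambda>(p, q). (fst q, snd q, snd p)"
          and j = "\<lambda>(a, b, c). ((a @ b, c), (a, b))"]) auto
  also have "\<dots> = fa_mult (fa_mult f g) h w"
    unfolding fa_mult_def sum_distrib_right by (rule sum.Sigma[symmetric]) (auto simp: finite_splits)
  finally show "fa_mult f (fa_mult g h) w = fa_mult (fa_mult f g) h w" .
qed

lemma fa_monom_in_free_alg:
  assumes "w \<noteq> []" "set w \<subseteq> X"
  shows "(fa_monom w :: 'a list \<Rightarrow> 'k::idom) \<in> free_alg X"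
proof -
  have "{v. (fa_monom w :: 'a list \<Rightarrow> 'k) v \<noteq> 0} = {w}" by (auto simp: fa_monom_def)
  then show ?thesis using assms unfolding free_alg_def by auto
qed

lemma fa_mult_monom_Cons: "fa_mult (fa_monom [a]) F (a # w) = F w"
  unfolding fa_mult_def
  by (subst sum_eq_single_term[where a = "([a], w)"])
     (auto simp: finite_splits fa_monom_def Cons_eq_append_conv)

lemma fa_mult_monom_left_eq_0: "(\<And>w. v \<noteq> a # w) \<Longrightarrow> fa_mult (fa_monom [a]) F v = 0"
  unfolding fa_mult_def by (rule sum.neutral) (auto simp: fa_monom_def)

lemma fa_mult_monom_snoc: "fa_mult F (fa_monom [a]) (u @ [a]) = F u"
  unfolding fa_mult_def
  by (subst sum_eq_single_term[where a = "(u, [a])"]) (auto simp: finite_splits fa_monom_def)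

lemma fa_mult_monom_right_eq_0: "(\<And>u. v \<noteq> u @ [a]) \<Longrightarrow> fa_mult F (fa_monom [a]) v = 0"
  unfolding fa_mult_def by (rule sum.neutral) (auto simp: fa_monom_def)

lemma fa_mult_monom_monom_Cons: "fa_mult (fa_monom [a]) (fa_monom w) = fa_monom (a # w)"
proof
  fix v
  show "fa_mult (fa_monom [a]) (fa_monom w) v = fa_monom (a # w) v"
  proof (cases "\<exists>v'. v = a # v'")
    case True
    then show ?thesis by (auto simp: fa_mult_monom_Cons) (simp add: fa_monom_def)
  next
    case False
    then show ?thesis by (auto simp: fa_mult_monom_left_eq_0) (simp add: fa_monom_def)
  qed
qed

text \<open>Values on the empty word are allowed, so this is the absence of zero divisors in
  the monoid ring K[X*]: a longest word of f times a longest word of g arises only once.\<close>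

lemma fa_mult_neq_0:
  fixes f g :: "'a list \<Rightarrow> 'k::idom"
  assumes ff: "finite {w. f w \<noteq> 0}" and fg: "finite {w. g w \<noteq> 0}"
    and "f \<noteq> (\<lambda>w. 0)" "g \<noteq> (\<lambda>w. 0)"
  shows "fa_mult f g \<noteq> (\<lambda>w. 0)"
proof -
  define m where "m = Max (length ` {w. f w \<noteq> 0})"
  define n where "n = Max (length ` {w. g w \<noteq> 0})"
  have "m \<in> length ` {w. f w \<noteq> 0}" "n \<in> length ` {w. g w \<noteq> 0}"
    unfolding m_def n_def using assms by (auto intro!: Max_in)
  then obtain u v where u: "f u \<noteq> 0" "length u = m" and v: "g v \<noteq> 0" "length v = n" by auto
  have "f (fst p) * g (snd p) = 0" if p: "p \<in> {(u', v'). u' @ v' = u @ v}" "p \<noteq> (u, v)" for p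
  proof (rule ccontr)
    assume "f (fst p) * g (snd p) \<noteq> 0"
    then have "length (fst p) \<le> m" "length (snd p) \<le> n"
      unfolding m_def n_def using ff fg by (auto intro!: Max_ge)
    moreover have "length (fst p) + length (snd p) = m + n"
      using p u v by (auto dest: arg_cong[of _ _ length])
    ultimately have "length (fst p) = length u" using u by simp
    then show False using p by (auto simp: append_eq_append_conv)
  qed
  then have "fa_mult f g (u @ v) = f u * g v"
    unfolding fa_mult_def by (subst sum_eq_single_term[where a = "(u, v)"]) (auto simp: finite_splits)
  then show ?thesis using u v by (metis mult_eq_0_iff)
qed

text \<open>Cancellation of g in the unitisation of K<X>, the scalar c living on the empty word.\<close>

lemma fa_mult_right_cancel:
  fixes d t g :: "'a list \<Rightarrow> 'k::idom"
  assumes "finite {w. d w \<noteq> 0}" "finite {w. t w \<noteq> 0}" "finite {w. g w \<noteq> 0}"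
    and "d [] = 0" "t [] = 0" "g \<noteq> (\<lambda>w. 0)"
    and eq: "fa_mult d g = fa_add (fa_smult c g) (fa_mult t g)"
  shows "t = d"
proof -
  define p where "p = (\<lambda>u. d u - t u - (if u = [] then c else 0))"
  have "fa_mult p g w = fa_mult d g w - fa_mult t g w - c * g w" for w
  proof -
    have "(\<Sum>q\<in>{(u, v). u @ v = w}. (if fst q = [] then c else 0) * g (snd q)) = c * g w"
      by (subst sum_eq_single_term[where a = "([], w)"]) (auto simp: finite_splits)
    then show ?thesis
      unfolding fa_mult_def p_def by (simp add: left_diff_distrib sum_subtractf)
  qed
  then have "fa_mult p g = (\<lambda>w. 0)"
    using eq by (auto simp: fa_add_def fa_smult_def fun_eq_iff)
  moreover have "finite {w. p w \<noteq> 0}"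
    by (rule finite_subset[where B = "{[]} \<union> {w. d w \<noteq> 0} \<union> {w. t w \<noteq> 0}"])
       (use assms in \<open>auto simp: p_def\<close>)
  ultimately have p0: "p = (\<lambda>w. 0)" using fa_mult_neq_0 assms by blast
  show ?thesis
  proof
    fix u
    show "t u = d u" using fun_cong[OF p0, of u] assms(4,5) by (cases "u = []") (simp_all add: p_def)
  qed
qed

lemma fa_ends_with_letter_if_commutes:
  assumes "A [] = 0" "fa_mult (fa_monom [y]) A = fa_mult B (fa_monom [y])" "A w \<noteq> 0"
  shows "\<exists>u. w = u @ [y]"
proof -
  have "w \<noteq> []" using assms(1,3) by auto
  have "fa_mult B (fa_monom [y]) (y # w) = A w"
    using assms(2) by (metis fa_mult_monom_Cons)
  then have "\<exists>u. y # w = u @ [y]" using assms(3) fa_mult_monom_right_eq_0 by metis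
  then show ?thesis using \<open>w \<noteq> []\<close> by (metis append_butlast_last_id last_ConsR last_snoc)
qed

lemma fa_decompose_right_letter:
  assumes A: "A \<in> free_alg Y" and ends: "\<And>w. A w \<noteq> 0 \<Longrightarrow> \<exists>u. w = u @ [y]"
  shows "\<exists>Z\<in>free_alg Y. A = fa_add (fa_smult (A [y]) (fa_monom [y])) (fa_mult Z (fa_monom [y]))"
proof
  define Z where "Z = (\<lambda>u. if u = [] then 0 else A (u @ [y]))"
  have "{u. Z u \<noteq> 0} \<subseteq> butlast ` {w. A w \<noteq> 0}"
    by (auto simp: Z_def split: if_splits intro!: image_eqI[of _ butlast])
  moreover have "finite {w. A w \<noteq> 0}" and "\<And>w. A w \<noteq> 0 \<Longrightarrow> set w \<subseteq> Y"
    using A unfolding free_alg_def by auto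
  ultimately have "finite {u. Z u \<noteq> 0}" by (meson finite_imageI finite_subset)
  moreover have "u \<noteq> [] \<and> set u \<subseteq> Y" if "Z u \<noteq> 0" for u
  proof -
    have "u \<noteq> []" "A (u @ [y]) \<noteq> 0" using that by (auto simp: Z_def split: if_splits)
    moreover have "set (u @ [y]) \<subseteq> Y" using A \<open>A (u @ [y]) \<noteq> 0\<close> unfolding free_alg_def by blast
    ultimately show ?thesis by auto
  qed
  ultimately show "Z \<in> free_alg Y" unfolding free_alg_def by blast
  show "A = fa_add (fa_smult (A [y]) (fa_monom [y])) (fa_mult Z (fa_monom [y]))"
  proof
    fix w
    show "A w = fa_add (fa_smult (A [y]) (fa_monom [y])) (fa_mult Z (fa_monom [y])) w"
    proof (cases "\<exists>u. w = u @ [y]")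
      case True
      then obtain u where w: "w = u @ [y]" by blast
      have "fa_mult Z (fa_monom [y]) w = Z u" using w by (simp add: fa_mult_monom_snoc)
      also have "\<dots> = (if u = [] then 0 else A w)" unfolding Z_def w ..
      finally have Zy: "fa_mult Z (fa_monom [y]) w = (if u = [] then 0 else A w)" .
      have y: "fa_monom [y] w = (if u = [] then 1 else 0)"
        using w by (simp add: fa_monom_def)
      show ?thesis
        unfolding fa_add_def fa_smult_def Zy y by (cases "u = []") (simp_all add: w)
    next
      case False
      have Zy: "fa_mult Z (fa_monom [y]) w = 0" using False by (intro fa_mult_monom_right_eq_0) auto
      have y: "fa_monom [y] w = 0" using False by (metis append_Nil fa_monom_def)
      have "A w = 0" using False ends by blast
      then show ?thesis unfolding fa_add_def fa_smult_def Zy y by simp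
    qed
  qed
qed

lemma fa_right_factor_if_commutes:
  assumes "A \<in> free_alg Y" "fa_mult (fa_monom [y]) A = fa_mult B (fa_monom [y])"
  obtains c Z where "Z \<in> free_alg Y" "A = fa_add (fa_smult c (fa_monom [y])) (fa_mult Z (fa_monom [y]))"
proof -
  have "A [] = 0" using assms(1) unfolding free_alg_def by blast
  then show ?thesis
    using that fa_decompose_right_letter[OF assms(1) fa_ends_with_letter_if_commutes[OF _ assms(2)]]
    by blast
qed

lemma fa_idealD:
  assumes "fa_ideal X I"
  shows "I \<subseteq> free_alg X" and "(\<lambda>w. 0) \<in> I"
    and "f \<in> I \<Longrightarrow> g \<in> I \<Longrightarrow> fa_add f g \<in> I"
    and "f \<in> I \<Longrightarrow> fa_smult c f \<in> I"
    and "f \<in> I \<Longrightarrow> g \<in> free_alg X \<Longrightarrow> fa_mult f g \<in> I"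
    and "f \<in> I \<Longrightarrow> g \<in> free_alg X \<Longrightarrow> fa_mult g f \<in> I"
  using assms unfolding fa_ideal_def by blast+

lemma fa_ideal_monom_in_if_letters:
  assumes I: "fa_ideal X I" and letters: "\<And>x. x \<in> X \<Longrightarrow> fa_monom [x] \<in> I"
    and "w \<noteq> []" "set w \<subseteq> X"
  shows "fa_monom w \<in> I"
  using assms(3,4)
proof (induction w)
  case (Cons x w)
  show ?case
  proof (cases "w = []")
    case False
    then have "fa_monom w \<in> free_alg X" using Cons.prems by (intro fa_monom_in_free_alg) auto
    then have "fa_mult (fa_monom [x]) (fa_monom w) \<in> I"
      using Cons.prems letters fa_idealD(5)[OF I] by auto
    then show ?thesis by (simp add: fa_mult_monom_monom_Cons)
  qed (use Cons.prems letters in simp)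
qed simp

lemma fa_ideal_eq_free_alg_if_letters:
  assumes I: "fa_ideal X I" and letters: "\<And>x. x \<in> X \<Longrightarrow> fa_monom [x] \<in> I"
  shows "I = free_alg X"
proof
  show "I \<subseteq> free_alg X" using fa_idealD(1)[OF I] .
  have "finite S \<Longrightarrow> f \<in> free_alg X \<Longrightarrow> {w. f w \<noteq> 0} \<subseteq> S \<Longrightarrow> f \<in> I" for S f
  proof (induction S arbitrary: f rule: finite_induct)
    case empty
    then have "f = (\<lambda>w. 0)" by auto
    then show ?case using fa_idealD(2)[OF I] by simp
  next
    case (insert w S)
    define f' where "f' = (\<lambda>v. if v = w then 0 else f v)"
    have "f' \<in> free_alg X"
      using insert.prems(1) unfolding free_alg_def f'_def by (auto elim: finite_subset[rotated])
    moreover have "{v. f' v \<noteq> 0} \<subseteq> S" using insert.prems(2) by (auto simp: f'_def)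
    ultimately have "f' \<in> I" by (rule insert.IH)
    moreover have "fa_smult (f w) (fa_monom w) \<in> I"
    proof (cases "f w = 0")
      case True
      then show ?thesis using fa_idealD(2)[OF I] by (simp add: fa_smult_def)
    next
      case False
      then have "w \<noteq> []" "set w \<subseteq> X" using insert.prems(1) unfolding free_alg_def by auto
      then show ?thesis using fa_ideal_monom_in_if_letters[OF I letters] fa_idealD(4)[OF I] by blast
    qed
    moreover have "f = fa_add f' (fa_smult (f w) (fa_monom w))"
      by (auto simp: fa_add_def fa_smult_def f'_def fa_monom_def)
    ultimately show ?case using fa_idealD(3)[OF I] by metis
  qed
  then show "free_alg X \<subseteq> I" unfolding free_alg_def by blast
qed

lemma fa_alg_isoD:
  assumes "fa_alg_iso \<phi> A B"
  shows "inj_on \<phi> A" and "\<phi> ` A = B"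
    and "f \<in> A \<Longrightarrow> g \<in> A \<Longrightarrow> \<phi> (fa_add f g) = fa_add (\<phi> f) (\<phi> g)"
    and "f \<in> A \<Longrightarrow> \<phi> (fa_smult c f) = fa_smult c (\<phi> f)"
    and "f \<in> A \<Longrightarrow> g \<in> A \<Longrightarrow> \<phi> (fa_mult f g) = fa_mult (\<phi> f) (\<phi> g)"
  using assms unfolding fa_alg_iso_def bij_betw_def by blast+

lemma fa_alg_iso_zero:
  assumes "fa_alg_iso \<phi> A B" "(\<lambda>w. 0) \<in> A"
  shows "\<phi> (\<lambda>w. 0) = (\<lambda>w. 0)"
proof -
  have "\<phi> (\<lambda>w. 0) = \<phi> (fa_smult 0 (\<lambda>w. 0))" by (simp add: fa_smult_def)
  also have "\<dots> = fa_smult 0 (\<phi> (\<lambda>w. 0))" using fa_alg_isoD(4)[OF assms] .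
  finally show ?thesis by (simp add: fa_smult_def)
qed

lemma fa_alg_iso_neq_0:
  assumes "fa_alg_iso \<phi> A B" "(\<lambda>w. 0) \<in> A" "f \<in> A" "f \<noteq> (\<lambda>w. 0)"
  shows "\<phi> f \<noteq> (\<lambda>w. 0)"
  using inj_onD[OF fa_alg_isoD(1)[OF assms(1)] _ assms(3,2)] fa_alg_iso_zero[OF assms(1,2)] assms(4)
  by metis

lemma fa_monom_letter_in_ideal_if_iso:
  assumes I: "fa_ideal X I" and iso: "fa_alg_iso \<phi> I (free_alg Y)"
    and g: "g \<in> I" "\<phi> g = fa_monom [y]" and x: "x \<in> X"
  shows "fa_monom [x] \<in> I"
proof -
  let ?x = "fa_monom [x]" and ?y = "fa_monom [y]"
  have "?x \<in> free_alg X" using x by (intro fa_monom_in_free_alg) auto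
  then have xg: "fa_mult ?x g \<in> I" and gx: "fa_mult g ?x \<in> I"
    using fa_idealD(5,6)[OF I g(1)] by auto
  have "fa_mult ?y (\<phi> (fa_mult ?x g)) = \<phi> (fa_mult g (fa_mult ?x g))"
    using fa_alg_isoD(5)[OF iso g(1) xg] g(2) by simp
  also have "\<dots> = \<phi> (fa_mult (fa_mult g ?x) g)" by (simp add: fa_mult_assoc)
  also have "\<dots> = fa_mult (\<phi> (fa_mult g ?x)) ?y"
    using fa_alg_isoD(5)[OF iso gx g(1)] g(2) by simp
  finally have "fa_mult ?y (\<phi> (fa_mult ?x g)) = fa_mult (\<phi> (fa_mult g ?x)) ?y" .
  moreover have "\<phi> (fa_mult ?x g) \<in> free_alg Y" using fa_alg_isoD(2)[OF iso] xg by blast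
  ultimately obtain c Z where "Z \<in> free_alg Y"
    and decomp: "\<phi> (fa_mult ?x g) = fa_add (fa_smult c ?y) (fa_mult Z ?y)"
    by (metis fa_right_factor_if_commutes)
  obtain t where t: "t \<in> I" "\<phi> t = Z"
    using \<open>Z \<in> free_alg Y\<close> unfolding fa_alg_isoD(2)[OF iso, symmetric] by (metis imageE)
  have cg: "fa_smult c g \<in> I" and tg: "fa_mult t g \<in> I"
    using fa_idealD(4,5)[OF I] fa_idealD(1)[OF I] g(1) t(1) by auto
  have "\<phi> (fa_add (fa_smult c g) (fa_mult t g)) = \<phi> (fa_mult ?x g)"
    using decomp fa_alg_isoD(3)[OF iso cg tg] fa_alg_isoD(4)[OF iso g(1)]
      fa_alg_isoD(5)[OF iso t(1) g(1)] g(2) t(2) by simp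
  then have eq: "fa_mult ?x g = fa_add (fa_smult c g) (fa_mult t g)"
    using inj_onD[OF fa_alg_isoD(1)[OF iso] _ fa_idealD(3)[OF I cg tg] xg] by simp
  have "g \<noteq> (\<lambda>w. 0)"
  proof
    assume "g = (\<lambda>w. 0)"
    then have "\<phi> g = (\<lambda>w. 0)" using fa_alg_iso_zero[OF iso fa_idealD(2)[OF I]] by simp
    then show False using fun_cong[OF g(2), of "[y]"] by (simp add: fa_monom_def)
  qed
  moreover have "t \<in> free_alg X" "g \<in> free_alg X"
    using fa_idealD(1)[OF I] t(1) g(1) by auto
  ultimately have "t = ?x"
    using fa_mult_right_cancel[OF _ _ _ _ _ _ eq] \<open>?x \<in> free_alg X\<close> unfolding free_alg_def by blast
  then show ?thesis using t(1) by simp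
qed

theorem lemma6p4:
  fixes X :: "'x set" and Y :: "'y set" and I :: "('x list \<Rightarrow> 'k::idom) set"
  assumes "fa_ideal X I"
    and "I \<noteq> free_alg X"
    and "\<exists>f\<in>I. f \<noteq> (\<lambda>w. 0)"
  shows "\<not> (\<exists>\<phi>. fa_alg_iso \<phi> I (free_alg Y :: ('y list \<Rightarrow> 'k) set))"
proof
  assume "\<exists>\<phi>. fa_alg_iso \<phi> I (free_alg Y :: ('y list \<Rightarrow> 'k) set)"
  then obtain \<phi> :: "('x list \<Rightarrow> 'k) \<Rightarrow> ('y list \<Rightarrow> 'k)" where iso: "fa_alg_iso \<phi> I (free_alg Y)"
    by blast
  obtain f where f: "f \<in> I" "f \<noteq> (\<lambda>w. 0)" using assms(3) by blast
  then have "\<phi> f \<noteq> (\<lambda>w. 0)" by (rule fa_alg_iso_neq_0[OF iso fa_idealD(2)[OF assms(1)]])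
  then obtain w where "\<phi> f w \<noteq> 0" by blast
  moreover have "\<phi> f \<in> free_alg Y" using fa_alg_isoD(2)[OF iso] f(1) by blast
  ultimately have "w \<noteq> []" "set w \<subseteq> Y" unfolding free_alg_def by auto
  then have "hd w \<in> Y" using hd_in_set by blast
  then have "(fa_monom [hd w] :: 'y list \<Rightarrow> 'k) \<in> \<phi> ` I"
    unfolding fa_alg_isoD(2)[OF iso] using \<open>hd w \<in> Y\<close> by (intro fa_monom_in_free_alg) auto
  then obtain g where g: "g \<in> I" "\<phi> g = fa_monom [hd w]" by (metis imageE)
  have "I = free_alg X"
    by (rule fa_ideal_eq_free_alg_if_letters[OF assms(1) fa_monom_letter_in_ideal_if_iso[OF assms(1) iso g]])
  with assms(2) show False ..
qed

end
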